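(* Let $\alpha_1,\dots,\alpha_6\in\mathbb{C}$ with $2\alpha_1+\alpha_2+\dots+\alpha_6=1$. The rational symplectic transformation $$S_1:(q_1,p_1,q_2,p_2,t,s)\mapsto(X,Y,Z,W,T,S)=\Big(q_1,\,p_1+\frac{q_2p_2-\alpha_1-\alpha_3}{q_1},\,\frac{q_2}{q_1},\,p_2q_1,\,t,\,\frac{s}{t}\Big)$$ transforms the Hamiltonian system with Hamiltonians $H'_1,H'_2$ into the Hamiltonian system (in variables $(X,Y,Z,W)$, times $(T,S)$) with Hamiltonians $H''_1,H''_2$, where $H''_1=H_{VI}(q_1,p_1,t;\alpha_1+\alpha_4+\alpha_6,\alpha_1+\alpha_2,\alpha_3,\alpha_1+\alpha_5,-\alpha_1-\alpha_3)-\frac{\alpha_4}{t(ts-1)}q_1p_1+\frac{\alpha_3(s-1)}{(t-1)(ts-1)}q_2p_2+\frac{s}{ts-1}p_1p_2-\frac{1}{t-1}p_1q_2p_2+\frac{2(s-1)}{(t-1)(ts-1)}q_1p_1q_2p_2-\frac{q_1q_2(q_1p_1+\alpha_3)\{(ts-1)p_2-(t-1)(q_2p_2+\alpha_4)\}}{t(t-1)(ts-1)}$ and $H''_2=\pi(H''_1)$, with $\pi$ the substitution $(q_1,p_1,q_2,p_2,t,s;\alpha_1,\dots,\alpha_6)\mapsto(q_2,p_2,q_1,p_1,s,t;-\alpha_1-\alpha_2-\alpha_3-\alpha_4,\alpha_2,\alpha_4,\alpha_3,1-\alpha_6,1-\alpha_5)$ (the variables of $H''_i$ being renamed $(X,Y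,Z,W,T,S)\to(q_1,p_1,q_2,p_2,t,s)$).
   Context: $H_{VI}(q,p,t;a_0,a_1,a_2,a_3,a_4)=\frac{1}{t(t-1)}\big[p^2(q-t)(q-1)q-\{(a_0-1)(q-1)q+a_3(q-t)q+a_4(q-t)(q-1)\}p+a_2(a_1+a_2)(q-t)\big]$. A Hamiltonian system with Hamiltonians $K_1,K_2$ means $dq_j=\frac{\partial K_1}{\partial p_j}dt+\frac{\partial K_2}{\partial p_j}ds$, $dp_j=-\frac{\partial K_1}{\partial q_j}dt-\frac{\partial K_2}{\partial q_j}ds$ ($j=1,2$). $H'_1=H_{VI}(q_1,p_1,t;\alpha_1+\alpha_4+\alpha_6,-\alpha_1-\alpha_2,\alpha_2,\alpha_1+\alpha_5,\alpha_1+\alpha_3)+\alpha_2\Big\{\frac{(s-1)q_2}{(t-1)(t-s)}-\frac{sq_1}{t(t-s)}+\frac{q_1q_2}{t(t-1)}\Big\}p_2+\alpha_4\frac{(q_1-q_2)p_1}{t-s}+\Big\{\frac{2(s-1)q_1q_2}{(t-1)(t-s)}-\frac{tq_2^2+sq_1^2}{t(t-s)}+\frac{(q_1^2+t)q_2}{t(t-1)}\Big\}p_1p_2$, and $H'_2$ obtained from $H'_1$ by $q_1\leftrightarrow q_2$, $p_1\leftrightarrow p_2$, $t\leftrightarrow s$, $\alpha_2\leftrightarrow\alpha_4$. *)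

theory Defs
  imports "HOL-Analysis.Analysis"
begin

definition HVI :: "complex \<Rightarrow> complex \<Rightarrow> complex \<Rightarrow> complex \<Rightarrow> complex \<Rightarrow> complex \<Rightarrow> complex \<Rightarrow> complex \<Rightarrow> complex" where
  "HVI q p t a0 a1 a2 a3 a4 =
     (p^2 * (q - t) * (q - 1) * q
      - ((a0 - 1) * (q - 1) * q + a3 * (q - t) * q + a4 * (q - t) * (q - 1)) * p
      + a2 * (a1 + a2) * (q - t)) / (t * (t - 1))"

text \<open>Hamiltonians are functions of (q1,p1,q2,p2,t,s).\<close>
type_synonym ham = "complex \<Rightarrow> complex \<Rightarrow> complex \<Rightarrow> complex \<Rightarrow> complex \<Rightarrow> complex \<Rightarrow> complex"

definition dq1 :: "ham \<Rightarrow> complex \<Rightarrow> complex \<Rightarrow> complex \<Rightarrow> complex \<Rightarrow> complex \<Rightarrow> complex \<Rightarrow> complex" where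
  "dq1 K a b c e t s = deriv (\<lambda>x. K x b c e t s) a"
definition dp1 :: "ham \<Rightarrow> complex \<Rightarrow> complex \<Rightarrow> complex \<Rightarrow> complex \<Rightarrow> complex \<Rightarrow> complex \<Rightarrow> complex" where
  "dp1 K a b c e t s = deriv (\<lambda>x. K a x c e t s) b"
definition dq2 :: "ham \<Rightarrow> complex \<Rightarrow> complex \<Rightarrow> complex \<Rightarrow> complex \<Rightarrow> complex \<Rightarrow> complex \<Rightarrow> complex" where
  "dq2 K a b c e t s = deriv (\<lambda>x. K a b x e t s) c"
definition dp2 :: "ham \<Rightarrow> complex \<Rightarrow> complex \<Rightarrow> complex \<Rightarrow> complex \<Rightarrow> complex \<Rightarrow> complex \<Rightarrow> complex" where
  "dp2 K a b c e t s = deriv (\<lambda>x. K a b c x t s) e"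

definition ham_sol :: "ham \<Rightarrow> ham \<Rightarrow> (complex \<times> complex) set \<Rightarrow>
    (complex \<times> complex \<Rightarrow> complex) \<Rightarrow> (complex \<times> complex \<Rightarrow> complex) \<Rightarrow>
    (complex \<times> complex \<Rightarrow> complex) \<Rightarrow> (complex \<times> complex \<Rightarrow> complex) \<Rightarrow> bool" where
  "ham_sol K1 K2 U Q1 P1 Q2 P2 \<longleftrightarrow> open U \<and>
    (\<forall>z\<in>U. Q1 differentiable (at z) \<and> P1 differentiable (at z) \<and>
            Q2 differentiable (at z) \<and> P2 differentiable (at z)) \<and>
    (\<forall>t s. (t, s) \<in> U \<longrightarrow>
      (let a = Q1 (t, s); b = P1 (t, s); c = Q2 (t, s); e = P2 (t, s) in
        ((\<lambda>x. Q1 (x, s)) has_field_derivative dp1 K1 a b c e t s) (at t) \<and>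
        ((\<lambda>x. Q1 (t, x)) has_field_derivative dp1 K2 a b c e t s) (at s) \<and>
        ((\<lambda>x. P1 (x, s)) has_field_derivative - dq1 K1 a b c e t s) (at t) \<and>
        ((\<lambda>x. P1 (t, x)) has_field_derivative - dq1 K2 a b c e t s) (at s) \<and>
        ((\<lambda>x. Q2 (x, s)) has_field_derivative dp2 K1 a b c e t s) (at t) \<and>
        ((\<lambda>x. Q2 (t, x)) has_field_derivative dp2 K2 a b c e t s) (at s) \<and>
        ((\<lambda>x. P2 (x, s)) has_field_derivative - dq2 K1 a b c e t s) (at t) \<and>
        ((\<lambda>x. P2 (t, x)) has_field_derivative - dq2 K2 a b c e t s) (at s)))"

definition H1' :: "complex \<Rightarrow> complex \<Rightarrow> complex \<Rightarrow> complex \<Rightarrow> complex \<Rightarrow> complex \<Rightarrow> ham" where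
  "H1' a1 a2 a3 a4 a5 a6 q1 p1 q2 p2 t s =
     HVI q1 p1 t (a1 + a4 + a6) (- a1 - a2) a2 (a1 + a5) (a1 + a3)
     + a2 * ((s - 1) * q2 / ((t - 1) * (t - s)) - s * q1 / (t * (t - s)) + q1 * q2 / (t * (t - 1))) * p2
     + a4 * (q1 - q2) * p1 / (t - s)
     + (2 * (s - 1) * q1 * q2 / ((t - 1) * (t - s)) - (t * q2^2 + s * q1^2) / (t * (t - s))
        + (q1^2 + t) * q2 / (t * (t - 1))) * p1 * p2"

definition H2' :: "complex \<Rightarrow> complex \<Rightarrow> complex \<Rightarrow> complex \<Rightarrow> complex \<Rightarrow> complex \<Rightarrow> ham" where
  "H2' a1 a2 a3 a4 a5 a6 q1 p1 q2 p2 t s = H1' a1 a4 a3 a2 a5 a6 q2 p2 q1 p1 s t"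

definition H1'' :: "complex \<Rightarrow> complex \<Rightarrow> complex \<Rightarrow> complex \<Rightarrow> complex \<Rightarrow> complex \<Rightarrow> ham" where
  "H1'' a1 a2 a3 a4 a5 a6 q1 p1 q2 p2 t s =
     HVI q1 p1 t (a1 + a4 + a6) (a1 + a2) a3 (a1 + a5) (- a1 - a3)
     - a4 / (t * (t * s - 1)) * q1 * p1
     + a3 * (s - 1) / ((t - 1) * (t * s - 1)) * q2 * p2
     + s / (t * s - 1) * p1 * p2
     - 1 / (t - 1) * p1 * q2 * p2
     + 2 * (s - 1) / ((t - 1) * (t * s - 1)) * q1 * p1 * q2 * p2
     - q1 * q2 * (q1 * p1 + a3) * ((t * s - 1) * p2 - (t - 1) * (q2 * p2 + a4))
        / (t * (t - 1) * (t * s - 1))"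

definition H2'' :: "complex \<Rightarrow> complex \<Rightarrow> complex \<Rightarrow> complex \<Rightarrow> complex \<Rightarrow> complex \<Rightarrow> ham" where
  "H2'' a1 a2 a3 a4 a5 a6 q1 p1 q2 p2 t s =
     H1'' (- a1 - a2 - a3 - a4) a2 a4 a3 (1 - a6) (1 - a5) q2 p2 q1 p1 s t"

end

theory Submission
  imports Defs
begin

text \<open>Since \<open>\<partial>\<^sub>T = \<partial>\<^sub>t + S \<partial>\<^sub>s\<close> and \<open>\<partial>\<^sub>S = T \<partial>\<^sub>s\<close>,
  in the old variables the new flows are those of the Hamiltonian fields of
  \<open>H'\<^sub>1 + S H'\<^sub>2\<close> and \<open>T H'\<^sub>2\<close>. Pushing these two fields through the Jacobian of the
  coordinate change (chain and quotient rules) and eliminating \<open>\<alpha>\<^sub>6\<close> by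
  \<open>2\<alpha>\<^sub>1 + \<alpha>\<^sub>2 + \<dots> + \<alpha>\<^sub>6 = 1\<close> gives the Hamiltonian fields of \<open>H''\<^sub>1\<close> and \<open>H''\<^sub>2\<close>;
  this last step is a set of identities between rational functions.\<close>

definition HVI_dq :: "complex \<Rightarrow> complex \<Rightarrow> complex \<Rightarrow> complex \<Rightarrow> complex \<Rightarrow> complex \<Rightarrow> complex \<Rightarrow> complex \<Rightarrow> complex" where
  "HVI_dq q p t a0 a1 a2 a3 a4 =
     (p^2 * (3 * q^2 - 2 * (1 + t) * q + t)
      - ((a0 - 1) * (2 * q - 1) + a3 * (2 * q - t) + a4 * (2 * q - t - 1)) * p
      + a2 * (a1 + a2)) / (t * (t - 1))"

definition HVI_dp :: "complex \<Rightarrow> complex \<Rightarrow> complex \<Rightarrow> complex \<Rightarrow> complex \<Rightarrow> complex \<Rightarrow> complex \<Rightarrow> complex \<Rightarrow> complex" where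
  "HVI_dp q p t a0 a1 a2 a3 a4 =
     (2 * p * q * (q - 1) * (q - t)
      - ((a0 - 1) * (q - 1) * q + a3 * (q - t) * q + a4 * (q - t) * (q - 1))) / (t * (t - 1))"

lemma dq1_H1':
  "dq1 (H1' a1 a2 a3 a4 a5 a6) q1 p1 q2 p2 t s =
     HVI_dq q1 p1 t (a1 + a4 + a6) (- a1 - a2) a2 (a1 + a5) (a1 + a3)
     + a2 * (q2 / (t * (t - 1)) - s / (t * (t - s))) * p2 + a4 * p1 / (t - s)
     + (2 * (s - 1) * q2 / ((t - 1) * (t - s)) - 2 * s * q1 / (t * (t - s))
        + 2 * q1 * q2 / (t * (t - 1))) * p1 * p2"
  unfolding dq1_def H1'_def HVI_def HVI_dq_def divide_inverse
  by (rule DERIV_imp_deriv, (rule derivative_eq_intros refl)+) (simp add: power2_eq_square algebra_simps)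

lemma dp1_H1':
  "dp1 (H1' a1 a2 a3 a4 a5 a6) q1 p1 q2 p2 t s =
     HVI_dp q1 p1 t (a1 + a4 + a6) (- a1 - a2) a2 (a1 + a5) (a1 + a3) + a4 * (q1 - q2) / (t - s)
     + (2 * (s - 1) * q1 * q2 / ((t - 1) * (t - s)) - (t * q2^2 + s * q1^2) / (t * (t - s))
        + (q1^2 + t) * q2 / (t * (t - 1))) * p2"
  unfolding dp1_def H1'_def HVI_def HVI_dp_def divide_inverse
  by (rule DERIV_imp_deriv, (rule derivative_eq_intros refl)+) (simp add: power2_eq_square algebra_simps)

lemma dq2_H1':
  "dq2 (H1' a1 a2 a3 a4 a5 a6) q1 p1 q2 p2 t s =
     a2 * ((s - 1) / ((t - 1) * (t - s)) + q1 / (t * (t - 1))) * p2 - a4 * p1 / (t - s)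
     + (2 * (s - 1) * q1 / ((t - 1) * (t - s)) - 2 * t * q2 / (t * (t - s))
          \<comment> \<open>not \<open>2 q\<^sub>2 / (t - s)\<close>, which differs at \<open>t = 0\<close> since \<open>x / 0 = 0\<close>\<close>
        + (q1^2 + t) / (t * (t - 1))) * p1 * p2"
  unfolding dq2_def H1'_def HVI_def divide_inverse
  by (rule DERIV_imp_deriv, (rule derivative_eq_intros refl)+) (simp add: power2_eq_square algebra_simps)

lemma dp2_H1':
  "dp2 (H1' a1 a2 a3 a4 a5 a6) q1 p1 q2 p2 t s =
     a2 * ((s - 1) * q2 / ((t - 1) * (t - s)) - s * q1 / (t * (t - s)) + q1 * q2 / (t * (t - 1)))
     + (2 * (s - 1) * q1 * q2 / ((t - 1) * (t - s)) - (t * q2^2 + s * q1^2) / (t * (t - s))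
        + (q1^2 + t) * q2 / (t * (t - 1))) * p1"
  unfolding dp2_def H1'_def HVI_def divide_inverse
  by (rule DERIV_imp_deriv, (rule derivative_eq_intros refl)+) (simp add: power2_eq_square algebra_simps)

lemma dq1_H1'':
  "dq1 (H1'' a1 a2 a3 a4 a5 a6) q1 p1 q2 p2 t s =
     HVI_dq q1 p1 t (a1 + a4 + a6) (a1 + a2) a3 (a1 + a5) (- a1 - a3)
     - a4 / (t * (t * s - 1)) * p1 + 2 * (s - 1) / ((t - 1) * (t * s - 1)) * p1 * q2 * p2
     - q2 * (2 * q1 * p1 + a3) * ((t * s - 1) * p2 - (t - 1) * (q2 * p2 + a4))
        / (t * (t - 1) * (t * s - 1))"
  unfolding dq1_def H1''_def HVI_def HVI_dq_def divide_inverse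
  by (rule DERIV_imp_deriv, (rule derivative_eq_intros refl)+) (simp add: power2_eq_square algebra_simps)

lemma dp1_H1'':
  "dp1 (H1'' a1 a2 a3 a4 a5 a6) q1 p1 q2 p2 t s =
     HVI_dp q1 p1 t (a1 + a4 + a6) (a1 + a2) a3 (a1 + a5) (- a1 - a3)
     - a4 / (t * (t * s - 1)) * q1 + s / (t * s - 1) * p2 - 1 / (t - 1) * q2 * p2
     + 2 * (s - 1) / ((t - 1) * (t * s - 1)) * q1 * q2 * p2
     - q1^2 * q2 * ((t * s - 1) * p2 - (t - 1) * (q2 * p2 + a4)) / (t * (t - 1) * (t * s - 1))"
  unfolding dp1_def H1''_def HVI_def HVI_dp_def divide_inverse
  by (rule DERIV_imp_deriv, (rule derivative_eq_intros refl)+) (simp add: power2_eq_square algebra_simps)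

lemma dq2_H1'':
  "dq2 (H1'' a1 a2 a3 a4 a5 a6) q1 p1 q2 p2 t s =
     a3 * (s - 1) / ((t - 1) * (t * s - 1)) * p2 - 1 / (t - 1) * p1 * p2
     + 2 * (s - 1) / ((t - 1) * (t * s - 1)) * q1 * p1 * p2
     - q1 * (q1 * p1 + a3) * ((t * s - 1) * p2 - (t - 1) * (q2 * p2 + a4) - (t - 1) * q2 * p2)
        / (t * (t - 1) * (t * s - 1))"
  unfolding dq2_def H1''_def HVI_def divide_inverse
  by (rule DERIV_imp_deriv, (rule derivative_eq_intros refl)+) (simp add: power2_eq_square algebra_simps)

lemma dp2_H1'':
  "dp2 (H1'' a1 a2 a3 a4 a5 a6) q1 p1 q2 p2 t s =
     a3 * (s - 1) / ((t - 1) * (t * s - 1)) * q2 + s / (t * s - 1) * p1 - 1 / (t - 1) * p1 * q2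
     + 2 * (s - 1) / ((t - 1) * (t * s - 1)) * q1 * p1 * q2
     - q1 * q2 * (q1 * p1 + a3) * ((t * s - 1) - (t - 1) * q2) / (t * (t - 1) * (t * s - 1))"
  unfolding dp2_def H1''_def HVI_def divide_inverse
  by (rule DERIV_imp_deriv, (rule derivative_eq_intros refl)+) (simp add: power2_eq_square algebra_simps)

lemma partials_swap:
  fixes K :: ham
  defines "K' \<equiv> \<lambda>q1 p1 q2 p2 t s. K q2 p2 q1 p1 s t"
  shows "dq1 K' q1 p1 q2 p2 t s = dq2 K q2 p2 q1 p1 s t"
    and "dp1 K' q1 p1 q2 p2 t s = dp2 K q2 p2 q1 p1 s t"
    and "dq2 K' q1 p1 q2 p2 t s = dq1 K q2 p2 q1 p1 s t"
    and "dp2 K' q1 p1 q2 p2 t s = dp1 K q2 p2 q1 p1 s t"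
  by (simp_all add: K'_def dq1_def dp1_def dq2_def dp2_def)

lemma H2'_eq_swap: "H2' a1 a2 a3 a4 a5 a6 = (\<lambda>q1 p1 q2 p2 t s. H1' a1 a4 a3 a2 a5 a6 q2 p2 q1 p1 s t)"
  by (simp add: fun_eq_iff H2'_def)

lemma H2''_eq_swap:
  "H2'' a1 a2 a3 a4 a5 a6 =
     (\<lambda>q1 p1 q2 p2 t s. H1'' (- a1 - a2 - a3 - a4) a2 a4 a3 (1 - a6) (1 - a5) q2 p2 q1 p1 s t)"
  by (simp add: fun_eq_iff H2''_def)

lemmas partials_H2' =
  partials_swap[where K = "H1' a1 a4 a3 a2 a5 a6" for a1 a2 a3 a4 a5 a6, folded H2'_eq_swap]
lemmas partials_H2'' =
  partials_swap[where K = "H1'' (- a1 - a2 - a3 - a4) a2 a4 a3 (1 - a6) (1 - a5)" for a1 a2 a3 a4 a5 a6,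
    folded H2''_eq_swap]

lemmas Hamiltonian_partials =
  dq1_H1' dp1_H1' dq2_H1' dp2_H1' dq1_H1'' dp1_H1'' dq2_H1'' dp2_H1'' partials_H2' partials_H2''

lemma has_field_derivative_along_curve:
  fixes f :: "complex \<times> complex \<Rightarrow> complex" and \<gamma> :: "complex \<Rightarrow> complex \<times> complex"
  assumes f: "f differentiable at (t, s)"
    and ft: "((\<lambda>x. f (x, s)) has_field_derivative A) (at t)"
    and fs: "((\<lambda>x. f (t, x)) has_field_derivative B) (at s)"
    and \<gamma>: "(\<gamma> has_derivative (\<lambda>h. (u * h, v * h))) (at x)"
    and \<gamma>x: "\<gamma> x = (t, s)"
  shows "((\<lambda>y. f (\<gamma> y)) has_field_derivative u * A + v * B) (at x)"
proof -
  obtain D where D: "(f has_derivative D) (at (t, s))"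
    using f unfolding differentiable_def by blast
  have "((\<lambda>x. (x, s)) has_derivative (\<lambda>h. (h, 0))) (at t)"
    by (auto intro!: derivative_eq_intros)
  from diff_chain_at[OF this, of f D]
  have "((\<lambda>x. f (x, s)) has_derivative (\<lambda>h. D (h, 0))) (at t)"
    using D by (simp add: o_def)
  then have DA: "D (h, 0) = A * h" for h
    using has_derivative_unique ft unfolding has_field_derivative_def by metis
  have "((\<lambda>x. (t, x)) has_derivative (\<lambda>h. (0, h))) (at s)"
    by (auto intro!: derivative_eq_intros)
  from diff_chain_at[OF this, of f D]
  have "((\<lambda>x. f (t, x)) has_derivative (\<lambda>h. D (0, h))) (at s)"
    using D by (simp add: o_def)
  then have DB: "D (0, h) = B * h" for h
    using has_derivative_unique fs unfolding has_field_derivative_def by metis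
  have "D (u * h, v * h) = (u * A + v * B) * h" for h
    using linear_add[OF has_derivative_linear[OF D], of "(u * h, 0)" "(0, v * h)"]
    by (simp add: DA DB algebra_simps)
  moreover have "((\<lambda>y. f (\<gamma> y)) has_derivative (\<lambda>h. D (u * h, v * h))) (at x)"
    using diff_chain_at[OF \<gamma>, of f D] D \<gamma>x by (simp add: o_def)
  ultimately show ?thesis
    unfolding has_field_derivative_def by simp
qed

lemma has_field_derivative_time_change:
  fixes f :: "complex \<times> complex \<Rightarrow> complex"
  assumes f: "f differentiable at (T, T * S)"
    and ft: "((\<lambda>x. f (x, T * S)) has_field_derivative A) (at T)"
    and fs: "((\<lambda>x. f (T, x)) has_field_derivative B) (at (T * S))"
  shows "((\<lambda>x. f (x, x * S)) has_field_derivative A + S * B) (at T)"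
    and "((\<lambda>y. f (T, T * y)) has_field_derivative T * B) (at S)"
proof -
  have "((\<lambda>x. (x, x * S)) has_derivative (\<lambda>h. (1 * h, S * h))) (at T)"
    by (auto intro!: derivative_eq_intros simp: mult.commute)
  from has_field_derivative_along_curve[OF f ft fs this]
  show "((\<lambda>x. f (x, x * S)) has_field_derivative A + S * B) (at T)" by simp
  have "((\<lambda>y. (T, T * y)) has_derivative (\<lambda>h. (0 * h, T * h))) (at S)"
    by (auto intro!: derivative_eq_intros)
  from has_field_derivative_along_curve[OF f ft fs this]
  show "((\<lambda>y. f (T, T * y)) has_field_derivative T * B) (at S)" by simp
qed

lemma S1_coordinates_has_field_derivative:
  fixes Q1 P1 Q2 P2 :: "complex \<Rightarrow> complex"
  assumes Q1: "(Q1 has_field_derivative da) (at x)" and P1: "(P1 has_field_derivative db) (at x)"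
    and Q2: "(Q2 has_field_derivative dc) (at x)" and P2: "(P2 has_field_derivative de) (at x)"
    and nz: "Q1 x \<noteq> 0"
  shows "((\<lambda>y. P1 y + (Q2 y * P2 y - \<alpha> - \<beta>) / Q1 y) has_field_derivative
           db + ((dc * P2 x + Q2 x * de) * Q1 x - (Q2 x * P2 x - \<alpha> - \<beta>) * da) / (Q1 x * Q1 x)) (at x)"
    and "((\<lambda>y. Q2 y / Q1 y) has_field_derivative (dc * Q1 x - Q2 x * da) / (Q1 x * Q1 x)) (at x)"
    and "((\<lambda>y. P2 y * Q1 y) has_field_derivative de * Q1 x + P2 x * da) (at x)"
  using nz by (auto intro!: derivative_eq_intros Q1 P1 Q2 P2 simp: field_simps)

lemma open_time_change_preimage:
  fixes U :: "(complex \<times> complex) set"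
  assumes "open U"
  shows "open {(T, S). (T, T * S) \<in> U}"
proof -
  have "{(T, S). (T, T * S) \<in> U} = (\<lambda>z. (fst z, fst z * snd z)) -` U" by auto
  also have "open \<dots>"
    by (rule continuous_open_vimage[OF assms]) (intro continuous_intros)
  finally show ?thesis .
qed

lemma differentiable_time_change:
  fixes f :: "complex \<times> complex \<Rightarrow> complex"
  assumes "f differentiable at (fst z, fst z * snd z)"
  shows "(\<lambda>z. f (fst z, fst z * snd z)) differentiable at z"
proof -
  have "(\<lambda>z::complex \<times> complex. (fst z, fst z * snd z)) differentiable at z"
    using bounded_linear_imp_differentiable[OF bounded_linear_fst]
      bounded_linear_imp_differentiable[OF bounded_linear_snd]
    by (intro differentiable_Pair differentiable_mult) auto
  from differentiable_chain_at[OF this] assms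
  show ?thesis by (simp add: o_def)
qed

lemma ham_solD:
  fixes K1 K2 :: ham
  assumes "ham_sol K1 K2 U Q1 P1 Q2 P2" and "(t, s) \<in> U"
  defines "a \<equiv> Q1 (t, s)" and "b \<equiv> P1 (t, s)" and "c \<equiv> Q2 (t, s)" and "e \<equiv> P2 (t, s)"
  shows "Q1 differentiable at (t, s)" and "P1 differentiable at (t, s)"
    and "Q2 differentiable at (t, s)" and "P2 differentiable at (t, s)"
    and "((\<lambda>x. Q1 (x, s)) has_field_derivative dp1 K1 a b c e t s) (at t)"
    and "((\<lambda>x. Q1 (t, x)) has_field_derivative dp1 K2 a b c e t s) (at s)"
    and "((\<lambda>x. P1 (x, s)) has_field_derivative - dq1 K1 a b c e t s) (at t)"
    and "((\<lambda>x. P1 (t, x)) has_field_derivative - dq1 K2 a b c e t s) (at s)"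
    and "((\<lambda>x. Q2 (x, s)) has_field_derivative dp2 K1 a b c e t s) (at t)"
    and "((\<lambda>x. Q2 (t, x)) has_field_derivative dp2 K2 a b c e t s) (at s)"
    and "((\<lambda>x. P2 (x, s)) has_field_derivative - dq2 K1 a b c e t s) (at t)"
    and "((\<lambda>x. P2 (t, x)) has_field_derivative - dq2 K2 a b c e t s) (at s)"
  using assms unfolding ham_sol_def Let_def by blast+

lemma nonzero_time_change_denominators:
  fixes T S :: complex
  assumes "T \<noteq> 0" "T \<noteq> 1" "S \<noteq> 0" "S \<noteq> 1" "T * S \<noteq> 1"
  shows "T - 1 \<noteq> 0" "T * S - 1 \<noteq> 0" "S * T - 1 \<noteq> 0" "T - T * S \<noteq> 0" "T * S - T \<noteq> 0" "S - 1 \<noteq> 0"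
  using assms by (auto simp: right_diff_distrib'[symmetric] mult.commute)

text \<open>In the next two lemmas \<open>da, \<dots>, de\<close> is the velocity of \<open>(q\<^sub>1, p\<^sub>1, q\<^sub>2, p\<^sub>2)\<close>
  along \<open>\<partial>\<^sub>T\<close>, resp. \<open>\<partial>\<^sub>S\<close>, at \<open>(t, s) = (T, T S)\<close>, and the left-hand sides are the
  derivatives of the new coordinates given by the quotient rule.\<close>
lemma T_flow_identities:
  fixes a1 a2 a3 a4 a5 a6 a b c e T S :: complex
  defines "da \<equiv> dp1 (H1' a1 a2 a3 a4 a5 a6) a b c e T (T * S)
                + S * dp1 (H2' a1 a2 a3 a4 a5 a6) a b c e T (T * S)"
    and "db \<equiv> - dq1 (H1' a1 a2 a3 a4 a5 a6) a b c e T (T * S)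
                - S * dq1 (H2' a1 a2 a3 a4 a5 a6) a b c e T (T * S)"
    and "dc \<equiv> dp2 (H1' a1 a2 a3 a4 a5 a6) a b c e T (T * S)
                + S * dp2 (H2' a1 a2 a3 a4 a5 a6) a b c e T (T * S)"
    and "de \<equiv> - dq2 (H1' a1 a2 a3 a4 a5 a6) a b c e T (T * S)
                - S * dq2 (H2' a1 a2 a3 a4 a5 a6) a b c e T (T * S)"
    and "b' \<equiv> b + (c * e - a1 - a3) / a"
  assumes a6: "a6 = 1 - 2 * a1 - a2 - a3 - a4 - a5"
    and nz: "T \<noteq> 0" "T \<noteq> 1" "S \<noteq> 0" "S \<noteq> 1" "T * S \<noteq> 1" "a \<noteq> 0"
  shows "da = dp1 (H1'' a1 a2 a3 a4 a5 a6) a b' (c / a) (e * a) T S"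
    and "db + ((dc * e + c * de) * a - (c * e - a1 - a3) * da) / (a * a)
           = - dq1 (H1'' a1 a2 a3 a4 a5 a6) a b' (c / a) (e * a) T S"
    and "(dc * a - c * da) / (a * a) = dp2 (H1'' a1 a2 a3 a4 a5 a6) a b' (c / a) (e * a) T S"
    and "de * a + e * da = - dq2 (H1'' a1 a2 a3 a4 a5 a6) a b' (c / a) (e * a) T S"
  unfolding assms(1-5) a6 Hamiltonian_partials HVI_dq_def HVI_dp_def
proof (insert nz nonzero_time_change_denominators[OF nz(1-5)], goal_cases)
  case 1 then show ?case by (simp add: divide_simps) algebra
next
  case 2 then show ?case by (simp add: divide_simps) algebra
next
  case 3 then show ?case by (simp add: divide_simps) algebra
next
  case 4 then show ?case by (simp add: divide_simps) algebra
qed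

lemma S_flow_identities:
  fixes a1 a2 a3 a4 a5 a6 a b c e T S :: complex
  defines "da \<equiv> T * dp1 (H2' a1 a2 a3 a4 a5 a6) a b c e T (T * S)"
    and "db \<equiv> - T * dq1 (H2' a1 a2 a3 a4 a5 a6) a b c e T (T * S)"
    and "dc \<equiv> T * dp2 (H2' a1 a2 a3 a4 a5 a6) a b c e T (T * S)"
    and "de \<equiv> - T * dq2 (H2' a1 a2 a3 a4 a5 a6) a b c e T (T * S)"
    and "b' \<equiv> b + (c * e - a1 - a3) / a"
  assumes a6: "a6 = 1 - 2 * a1 - a2 - a3 - a4 - a5"
    and nz: "T \<noteq> 0" "T \<noteq> 1" "S \<noteq> 0" "S \<noteq> 1" "T * S \<noteq> 1" "a \<noteq> 0"
  shows "da = dp1 (H2'' a1 a2 a3 a4 a5 a6) a b' (c / a) (e * a) T S"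
    and "db + ((dc * e + c * de) * a - (c * e - a1 - a3) * da) / (a * a)
           = - dq1 (H2'' a1 a2 a3 a4 a5 a6) a b' (c / a) (e * a) T S"
    and "(dc * a - c * da) / (a * a) = dp2 (H2'' a1 a2 a3 a4 a5 a6) a b' (c / a) (e * a) T S"
    and "de * a + e * da = - dq2 (H2'' a1 a2 a3 a4 a5 a6) a b' (c / a) (e * a) T S"
  unfolding assms(1-5) a6 Hamiltonian_partials HVI_dq_def HVI_dp_def
proof (insert nz nonzero_time_change_denominators[OF nz(1-5)], goal_cases)
  case 1 then show ?case by (simp add: divide_simps) algebra
next
  case 2 then show ?case by (simp add: divide_simps) algebra
next
  case 3 then show ?case by (simp add: divide_simps) algebra
next
  case 4 then show ?case by (simp add: divide_simps) algebra
qed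

lemma S1_T_flow:
  fixes a1 a2 a3 a4 a5 a6 T S :: complex and q1 p1 q2 p2 :: "complex \<times> complex \<Rightarrow> complex"
  defines "a \<equiv> q1 (T, T * S)" and "b \<equiv> p1 (T, T * S)" and "c \<equiv> q2 (T, T * S)" and "e \<equiv> p2 (T, T * S)"
  assumes sum: "2 * a1 + a2 + a3 + a4 + a5 + a6 = 1"
    and sol: "ham_sol (H1' a1 a2 a3 a4 a5 a6) (H2' a1 a2 a3 a4 a5 a6) U q1 p1 q2 p2"
    and TS: "(T, T * S) \<in> U"
    and nz: "T \<noteq> 0" "T \<noteq> 1" "S \<noteq> 0" "S \<noteq> 1" "T * S \<noteq> 1" "a \<noteq> 0"
  shows "((\<lambda>x. q1 (x, x * S)) has_field_derivative
            dp1 (H1'' a1 a2 a3 a4 a5 a6) a (b + (c * e - a1 - a3) / a) (c / a) (e * a) T S) (at T) \<and>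
         ((\<lambda>x. p1 (x, x * S) + (q2 (x, x * S) * p2 (x, x * S) - a1 - a3) / q1 (x, x * S)) has_field_derivative
            - dq1 (H1'' a1 a2 a3 a4 a5 a6) a (b + (c * e - a1 - a3) / a) (c / a) (e * a) T S) (at T) \<and>
         ((\<lambda>x. q2 (x, x * S) / q1 (x, x * S)) has_field_derivative
            dp2 (H1'' a1 a2 a3 a4 a5 a6) a (b + (c * e - a1 - a3) / a) (c / a) (e * a) T S) (at T) \<and>
         ((\<lambda>x. p2 (x, x * S) * q1 (x, x * S)) has_field_derivative
            - dq2 (H1'' a1 a2 a3 a4 a5 a6) a (b + (c * e - a1 - a3) / a) (c / a) (e * a) T S) (at T)"
proof -
  note old = ham_solD[OF sol TS, folded a_def b_def c_def e_def]
  note q1T = has_field_derivative_time_change(1)[OF old(1) old(5,6)]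
  note p1T = has_field_derivative_time_change(1)[OF old(2) old(7,8)]
  note q2T = has_field_derivative_time_change(1)[OF old(3) old(9,10)]
  note p2T = has_field_derivative_time_change(1)[OF old(4) old(11,12)]
  note new = S1_coordinates_has_field_derivative(1)[where \<alpha> = a1 and \<beta> = a3]
    S1_coordinates_has_field_derivative(2,3)
  note new = new[OF q1T p1T q2T p2T, folded a_def b_def c_def e_def, OF nz(6)]
  have a6: "a6 = 1 - 2 * a1 - a2 - a3 - a4 - a5" using sum by (simp add: algebra_simps)
  note flow_eqs = T_flow_identities[OF a6 nz, of b c e]
  show ?thesis
    using q1T new flow_eqs by simp
qed

lemma S1_S_flow:
  fixes a1 a2 a3 a4 a5 a6 T S :: complex and q1 p1 q2 p2 :: "complex \<times> complex \<Rightarrow> complex"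
  defines "a \<equiv> q1 (T, T * S)" and "b \<equiv> p1 (T, T * S)" and "c \<equiv> q2 (T, T * S)" and "e \<equiv> p2 (T, T * S)"
  assumes sum: "2 * a1 + a2 + a3 + a4 + a5 + a6 = 1"
    and sol: "ham_sol (H1' a1 a2 a3 a4 a5 a6) (H2' a1 a2 a3 a4 a5 a6) U q1 p1 q2 p2"
    and TS: "(T, T * S) \<in> U"
    and nz: "T \<noteq> 0" "T \<noteq> 1" "S \<noteq> 0" "S \<noteq> 1" "T * S \<noteq> 1" "a \<noteq> 0"
  shows "((\<lambda>y. q1 (T, T * y)) has_field_derivative
            dp1 (H2'' a1 a2 a3 a4 a5 a6) a (b + (c * e - a1 - a3) / a) (c / a) (e * a) T S) (at S) \<and>
         ((\<lambda>y. p1 (T, T * y) + (q2 (T, T * y) * p2 (T, T * y) - a1 - a3) / q1 (T, T * y)) has_field_derivative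
            - dq1 (H2'' a1 a2 a3 a4 a5 a6) a (b + (c * e - a1 - a3) / a) (c / a) (e * a) T S) (at S) \<and>
         ((\<lambda>y. q2 (T, T * y) / q1 (T, T * y)) has_field_derivative
            dp2 (H2'' a1 a2 a3 a4 a5 a6) a (b + (c * e - a1 - a3) / a) (c / a) (e * a) T S) (at S) \<and>
         ((\<lambda>y. p2 (T, T * y) * q1 (T, T * y)) has_field_derivative
            - dq2 (H2'' a1 a2 a3 a4 a5 a6) a (b + (c * e - a1 - a3) / a) (c / a) (e * a) T S) (at S)"
proof -
  note old = ham_solD[OF sol TS, folded a_def b_def c_def e_def]
  note q1S = has_field_derivative_time_change(2)[OF old(1) old(5,6)]
  note p1S = has_field_derivative_time_change(2)[OF old(2) old(7,8)]
  note q2S = has_field_derivative_time_change(2)[OF old(3) old(9,10)]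
  note p2S = has_field_derivative_time_change(2)[OF old(4) old(11,12)]
  note new = S1_coordinates_has_field_derivative(1)[where \<alpha> = a1 and \<beta> = a3]
    S1_coordinates_has_field_derivative(2,3)
  note new = new[OF q1S p1S q2S p2S, folded a_def b_def c_def e_def, OF nz(6)]
  have a6: "a6 = 1 - 2 * a1 - a2 - a3 - a4 - a5" using sum by (simp add: algebra_simps)
  note flow_eqs = S_flow_identities[OF a6 nz, of b c e]
  show ?thesis
    using q1S new flow_eqs by simp
qed

theorem mainTheorem6:
  fixes a1 a2 a3 a4 a5 a6 :: complex
    and U :: "(complex \<times> complex) set"
    and q1 p1 q2 p2 :: "complex \<times> complex \<Rightarrow> complex"
  assumes sum: "2 * a1 + a2 + a3 + a4 + a5 + a6 = 1"
    and sol: "ham_sol (H1' a1 a2 a3 a4 a5 a6) (H2' a1 a2 a3 a4 a5 a6) U q1 p1 q2 p2"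
    and dom: "\<forall>t s. (t, s) \<in> U \<longrightarrow> t \<noteq> 0 \<and> t \<noteq> 1 \<and> s \<noteq> 0 \<and> s \<noteq> 1 \<and> t \<noteq> s"
    and q1nz: "\<forall>z\<in>U. q1 z \<noteq> 0"
  shows "ham_sol (H1'' a1 a2 a3 a4 a5 a6) (H2'' a1 a2 a3 a4 a5 a6)
           {(T, S). (T, T * S) \<in> U}
           (\<lambda>(T, S). q1 (T, T * S))
           (\<lambda>(T, S). p1 (T, T * S) + (q2 (T, T * S) * p2 (T, T * S) - a1 - a3) / q1 (T, T * S))
           (\<lambda>(T, S). q2 (T, T * S) / q1 (T, T * S))
           (\<lambda>(T, S). p2 (T, T * S) * q1 (T, T * S))"
  unfolding ham_sol_def
proof (intro conjI ballI allI impI, goal_cases)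
  show "open {(T, S). (T, T * S) \<in> U}"
    using sol open_time_change_preimage unfolding ham_sol_def by blast
next
  fix z assume "z \<in> {(T, S). (T, T * S) \<in> U}"
  then have zU: "(fst z, fst z * snd z) \<in> U" by (cases z) auto
  note old = ham_solD(1-4)[OF sol zU, THEN differentiable_time_change]
  have "q1 (fst z, fst z * snd z) \<noteq> 0" using q1nz zU by blast
  with old show "(\<lambda>(T, S). q1 (T, T * S)) differentiable at z"
    and "(\<lambda>(T, S). p1 (T, T * S) + (q2 (T, T * S) * p2 (T, T * S) - a1 - a3) / q1 (T, T * S)) differentiable at z"
    and "(\<lambda>(T, S). q2 (T, T * S) / q1 (T, T * S)) differentiable at z"
    and "(\<lambda>(T, S). p2 (T, T * S) * q1 (T, T * S)) differentiable at z"
    unfolding case_prod_beta' by (auto intro!: derivative_intros)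
next
  case (6 T S)
  then have TU: "(T, T * S) \<in> U" by simp
  have "T \<noteq> 0" "T \<noteq> 1" "T * S \<noteq> 0" "T * S \<noteq> 1" "T \<noteq> T * S"
    using dom TU by blast+
  then have nz: "T \<noteq> 0" "T \<noteq> 1" "S \<noteq> 0" "S \<noteq> 1" "T * S \<noteq> 1" "q1 (T, T * S) \<noteq> 0"
    using q1nz TU by auto
  show ?case
    using S1_T_flow[OF sum sol TU nz] S1_S_flow[OF sum sol TU nz] by simp
qed

end
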